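(* Let $c>0$, $D>0$, $k>0$ and let $u(\theta,\varphi,t)$ be the solution of the initial value problem described in the context, with approximation of truncation degree $L\in\mathbb N$ \[ u_L(\theta ,\varphi ,t) = \exp\left(-\frac{c^{2}t}{2D}\right)\sum_{l=0}^{L-1}\sum_{m=-l}^{l}Y_{lm}(\theta ,\varphi )\xi _{lm}(t). \] Then there is a constant $C$ such that for $t>0$ the truncation error is bounded by \[ \|u(\theta ,\varphi ,t)-u_L(\theta ,\varphi ,t)\|_{L_2(\Omega \times \mathbb S^{2})} \le C\left(\sum_{l=L}^{\infty }(2l+1)C_{l}\right)^{1/2}. \] Moreover, for $L>\frac{\sqrt{D^{2}k^{2}+c^{2}}-Dk}{2Dk}$ it holds \[ \|u(\theta ,\varphi ,t)-u_L(\theta ,\varphi ,t)\|_{L_2(\Omega \times \mathbb S^{2})}\le C\exp\left( -\frac{c^{2}t}{2D}\right)\left(\sum_{l=L}^{\infty}(2l+1)C_{l}\right)^{1/2}, \] where the constant $C$ depends only on the parameters $c$, $D$ and $k$.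
   Context: On the unit sphere $\mathbb{S}^2$ with coordinates $(\theta,\varphi)\in[0,\pi)\times[0,2\pi)$ and measure $\sin\theta\,d\theta\,d\varphi$, $Y_{lm}(\theta,\varphi)=d_{lm}e^{im\varphi}P_l^m(\cos\theta)$, $d_{lm}=(-1)^m\big[\frac{(2l+1)(l-m)!}{4\pi(l+m)!}\big]^{1/2}$, are the complex spherical harmonics; $\mathbf{0}$ denotes $\theta=\varphi=0$. Let $T=\sum_{l\ge0}\sum_{m=-l}^l a_{lm}Y_{lm}$ be a real Gaussian isotropic random field: $a_{lm}$ complex Gaussian with $a_{lm}=(-1)^ma_{l,-m}$, $\mathbf E a_{lm}=0$, $\mathbf E a_{lm}\overline{a_{l'm'}}=\delta_l^{l'}\delta_m^{m'}C_l$, independent for $m\ne -m'$, with angular power spectrum satisfying $\sum_l(2l+1)C_l<\infty$. The solution of $\frac{1}{c^2}u_{tt}+\frac1D u_t=k^2\Delta_{(\theta,\varphi)}u$ ($\Delta_{(\theta,\varphi)}$ the Laplace–Beltrami operator), $u|_{t=0}=T$, $u_t|_{t=0}=0$, is the $L_2(\Omega\times\mathbb S^2)$-convergent series $u(\theta,\varphi,t)=\exp(-\frac{c^2t}{2D})\sum_{l\ge0}\sum_{m=-l}^lY_{lm}(\theta,\varphi)\xi_{lm}(t)$ with $\xi_{lm}(t)=\sqrt{\frac{4\pi}{2l+1}}a_{lm}\overline{Y_{l0}(\mathbf 0)}[A_l(t)+B_l(t)]$, where, with $K_l=\sqrt{\frac{c^4}{4D^2}-c^2l(l+1)k^2}$,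 $K_l'=\sqrt{c^2l(l+1)k^2-\frac{c^4}{4D^2}}$, $l^*=\frac{\sqrt{D^2k^2+c^2}-Dk}{2Dk}$: $A_l(t)=[\cosh(tK_l)+\frac{c^2}{2DK_l}\sinh(tK_l)]\mathbf 1_{\{l\le l^*\}}$, $B_l(t)=[\cos(tK_l')+\frac{c^2}{2DK_l'}\sin(tK_l')]\mathbf 1_{\{l>l^*\}}$ (with $\sinh(tK_l)/K_l:=t$ if $K_l=0$). $\|X\|_{L_2(\Omega\times\mathbb S^2)}$ denotes $(\mathbf E\int_{\mathbb S^2}|X|^2\sin\theta\,d\theta\,d\varphi)^{1/2}$. *)

theory Defs
  imports "HOL-Probability.Probability"
begin

text \<open>Associated Legendre function via the Rodrigues formula (no Condon-Shortley phase;
  the sign (-1)^m is in the normalising constant d_lm), valid for all -l <= m <= l.\<close>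
definition legendreP :: "nat \<Rightarrow> int \<Rightarrow> real \<Rightarrow> real" where
  "legendreP l m x = 1 / (2 ^ l * fact l) * (sqrt (1 - x^2) powi m)
      * (deriv ^^ nat (int l + m)) (\<lambda>y. (y^2 - 1) ^ l) x"

definition dlm :: "nat \<Rightarrow> int \<Rightarrow> real" where
  "dlm l m = (-1) ^ nat \<bar>m\<bar> *
     sqrt ((2 * real l + 1) * fact (nat (int l - m)) / (4 * pi * fact (nat (int l + m))))"

definition sphY :: "nat \<Rightarrow> int \<Rightarrow> real \<Rightarrow> real \<Rightarrow> complex" where
  "sphY l m \<theta> \<phi> = complex_of_real (dlm l m * legendreP l m (cos \<theta>)) * exp (\<i> * of_int m * of_real \<phi>)"

definition real_gaussian :: "'a measure \<Rightarrow> ('a \<Rightarrow> real) \<Rightarrow> bool" where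
  "real_gaussian M X \<longleftrightarrow> (\<exists>\<mu>. AE \<omega> in M. X \<omega> = \<mu>) \<or>
     (\<exists>\<mu> \<sigma>. \<sigma> > 0 \<and> distributed M lborel X (normal_density \<mu> \<sigma>))"

definition complex_gaussian :: "'a measure \<Rightarrow> ('a \<Rightarrow> complex) \<Rightarrow> bool" where
  "complex_gaussian M Z \<longleftrightarrow> (\<forall>\<alpha> \<beta> :: real. real_gaussian M (\<lambda>\<omega>. \<alpha> * Re (Z \<omega>) + \<beta> * Im (Z \<omega>)))"

definition iso_gauss_field :: "'a measure \<Rightarrow> (nat \<Rightarrow> int \<Rightarrow> 'a \<Rightarrow> complex) \<Rightarrow> (nat \<Rightarrow> real) \<Rightarrow> bool" where
  "iso_gauss_field M a Cl \<longleftrightarrow> prob_space M \<and>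
    (\<forall>l m. \<bar>m\<bar> \<le> int l \<longrightarrow> a l m \<in> borel_measurable M) \<and>
    (\<forall>l m. \<bar>m\<bar> \<le> int l \<longrightarrow> complex_gaussian M (a l m)) \<and>
    (\<forall>l m. \<bar>m\<bar> \<le> int l \<longrightarrow> (\<forall>\<omega>\<in>space M. a l m \<omega> = (-1) ^ nat \<bar>m\<bar> * cnj (a l (-m) \<omega>))) \<and>
    (\<forall>l m. \<bar>m\<bar> \<le> int l \<longrightarrow> integrable M (\<lambda>\<omega>. (cmod (a l m \<omega>))^2)) \<and>
    (\<forall>l m. \<bar>m\<bar> \<le> int l \<longrightarrow> integral\<^sup>L M (a l m) = 0) \<and>
    (\<forall>l m l' m'. \<bar>m\<bar> \<le> int l \<longrightarrow> \<bar>m'\<bar> \<le> int l' \<longrightarrow>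
        integral\<^sup>L M (\<lambda>\<omega>. a l m \<omega> * cnj (a l' m' \<omega>)) =
          (if l = l' \<and> m = m' then complex_of_real (Cl l) else 0)) \<and>
    (\<forall>l m l' m'. \<bar>m\<bar> \<le> int l \<longrightarrow> \<bar>m'\<bar> \<le> int l' \<longrightarrow> (l, m) \<noteq> (l', m') \<longrightarrow> (l, m) \<noteq> (l', -m') \<longrightarrow>
        prob_space.indep_var M borel (a l m) borel (a l' m')) \<and>
    summable (\<lambda>l. (2 * real l + 1) * Cl l)"

definition lstar :: "real \<Rightarrow> real \<Rightarrow> real \<Rightarrow> real" where
  "lstar c D k = (sqrt (D^2 * k^2 + c^2) - D * k) / (2 * D * k)"

definition Kl :: "real \<Rightarrow> real \<Rightarrow> real \<Rightarrow> nat \<Rightarrow> real" where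
  "Kl c D k l = sqrt (c^4 / (4 * D^2) - c^2 * real l * (real l + 1) * k^2)"

definition Kl' :: "real \<Rightarrow> real \<Rightarrow> real \<Rightarrow> nat \<Rightarrow> real" where
  "Kl' c D k l = sqrt (c^2 * real l * (real l + 1) * k^2 - c^4 / (4 * D^2))"

definition Al :: "real \<Rightarrow> real \<Rightarrow> real \<Rightarrow> nat \<Rightarrow> real \<Rightarrow> real" where
  "Al c D k l t = (if real l \<le> lstar c D k then
      cosh (t * Kl c D k l) + c^2 / (2 * D) *
        (if Kl c D k l = 0 then t else sinh (t * Kl c D k l) / Kl c D k l)
    else 0)"

definition Bl :: "real \<Rightarrow> real \<Rightarrow> real \<Rightarrow> nat \<Rightarrow> real \<Rightarrow> real" where
  "Bl c D k l t = (if real l > lstar c D k then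
      cos (t * Kl' c D k l) + c^2 / (2 * D * Kl' c D k l) * sin (t * Kl' c D k l)
    else 0)"

definition xi :: "real \<Rightarrow> real \<Rightarrow> real \<Rightarrow> (nat \<Rightarrow> int \<Rightarrow> 'a \<Rightarrow> complex) \<Rightarrow> nat \<Rightarrow> int \<Rightarrow> real \<Rightarrow> 'a \<Rightarrow> complex" where
  "xi c D k a l m t \<omega> = complex_of_real (sqrt (4 * pi / (2 * real l + 1))) * a l m \<omega>
      * cnj (sphY l 0 0 0) * complex_of_real (Al c D k l t + Bl c D k l t)"

definition usum :: "real \<Rightarrow> real \<Rightarrow> real \<Rightarrow> (nat \<Rightarrow> int \<Rightarrow> 'a \<Rightarrow> complex) \<Rightarrow> nat \<Rightarrow> 'a \<Rightarrow> real \<Rightarrow> real \<Rightarrow> real \<Rightarrow> complex" where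
  "usum c D k a L \<omega> \<theta> \<phi> t = complex_of_real (exp (- (c^2 * t) / (2 * D))) *
     (\<Sum>l<L. \<Sum>m\<in>{- int l..int l}. sphY l m \<theta> \<phi> * xi c D k a l m t \<omega>)"

definition L2sq :: "'a measure \<Rightarrow> ('a \<Rightarrow> real \<Rightarrow> real \<Rightarrow> complex) \<Rightarrow> ennreal" where
  "L2sq M X = (\<integral>\<^sup>+ \<omega>. (\<integral>\<^sup>+ \<theta>\<in>{0..<pi}. (\<integral>\<^sup>+ \<phi>\<in>{0..<2*pi}.
       ennreal ((cmod (X \<omega> \<theta> \<phi>))^2 * sin \<theta>) \<partial>lborel) \<partial>lborel) \<partial>M)"

end

theory Submission
  imports Defs "HOL-Computational_Algebra.Polynomial"
begin

(*
  The error u_N - u_L between two truncations is a finite expansion in the Y_lm whose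
  coefficient of degree l is a_lm times the damped temporal factor
  exp (- c^2 t / (2 D)) (A_l(t) + B_l(t)). The Y_lm are normalised on the
  sphere (Rodrigues' formula and repeated integration by parts on [-1, 1]) and the a_lm are
  uncorrelated with variance C_l, so the squared L2 norm of u_N - u_L is the sum over
  L <= l < N of (2 l + 1) C_l times the squared factor. An overdamped mode, l <= l*, has
  factor at most 1; an oscillating mode, l > l*, has factor at most
  (1 + c^2 / (2 D K'_l0)) exp (- c^2 t / (2 D)), where l0 = floor l* + 1 is the first
  oscillating mode and has the smallest frequency K'_l0. As the solution is only given as
  the L2 limit of the u_N, the bound reaches u - u_L through
  |x - z|^2 <= 2 |x - y|^2 + 2 |y - z|^2, which costs the factor sqrt 2 in the constant.
*)

section \<open>Legendre functions through the Rodrigues formula\<close>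

lemma higher_deriv_poly:
  "(deriv ^^ n) (\<lambda>y. poly p y) = (\<lambda>y. poly ((pderiv ^^ n) p) (y::real))"
proof (induction n)
  case (Suc n)
  then show ?case
    by (simp add: Suc.IH) (simp add: fun_eq_iff DERIV_imp_deriv[OF poly_DERIV])
qed simp

lemma higher_pderiv_eq_const:
  fixes p :: "'a::{idom,ring_char_0} poly"
  assumes "degree p \<le> n"
  shows "(pderiv ^^ n) p = [:fact n * coeff p n:]"
proof -
  have "degree ((pderiv ^^ n) p) = 0"
    using assms by (simp add: degree_higher_pderiv)
  then have "(pderiv ^^ n) p = [:coeff ((pderiv ^^ n) p) 0:]"
    by (metis degree_0_id)
  then show ?thesis
    by (simp add: coeff_higher_pderiv pochhammer_fact)
qed

lemma lead_coeff_higher_pderiv: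
  fixes p :: "'a::field_char_0 poly"
  assumes "n \<le> degree p"
  shows "lead_coeff ((pderiv ^^ n) p) = fact (degree p) / fact (degree p - n) * lead_coeff p"
proof -
  have "fact (degree p) = fact (degree p - n) * (pochhammer (of_nat (Suc (degree p - n))) n :: 'a)"
    using pochhammer_product[of "degree p - n" "degree p" 1] assms
    by (simp add: pochhammer_fact add.commute del: of_nat_diff)
  then have "pochhammer (of_nat (Suc (degree p - n))) n = (fact (degree p) / fact (degree p - n) :: 'a)"
    by (simp add: field_simps del: of_nat_Suc)
  moreover have "lead_coeff ((pderiv ^^ n) p) = pochhammer (of_nat (Suc (degree p - n))) n * lead_coeff p"
    using assms by (simp add: degree_higher_pderiv coeff_higher_pderiv del: of_nat_Suc)
  ultimately show ?thesis
    by simp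
qed

lemma higher_pderiv_power_mult:
  fixes B W :: "real poly"
  assumes "j \<le> k"
  shows "\<exists>V. (pderiv ^^ j) (B ^ k * W) = B ^ (k - j) * V \<and>
     (\<forall>x. poly B x = 0 \<longrightarrow> poly V x = (\<Prod>i<j. real (k - i)) * poly (pderiv B) x ^ j * poly W x)"
  using assms
proof (induction j)
  case 0
  then show ?case
    by (intro exI[of _ W]) auto
next
  case (Suc j)
  then obtain V where V: "(pderiv ^^ j) (B ^ k * W) = B ^ (k - j) * V"
    and V_root: "\<forall>x. poly B x = 0 \<longrightarrow> poly V x = (\<Prod>i<j. real (k - i)) * poly (pderiv B) x ^ j * poly W x"
    by auto
  obtain r where r: "k - j = Suc r"
    using Suc.prems by (metis Suc_diff_le Suc_le_D diff_Suc_Suc)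
  then have r': "k - Suc j = r"
    by simp
  define V' where "V' = smult (of_nat (Suc r)) (pderiv B * V) + B * pderiv V"
  have "(pderiv ^^ Suc j) (B ^ k * W) = pderiv (B ^ Suc r * V)"
    using V r by simp
  also have "\<dots> = B ^ (k - Suc j) * V'"
    unfolding r' V'_def pderiv_mult pderiv_power_Suc by (simp add: algebra_simps)
  finally have "(pderiv ^^ Suc j) (B ^ k * W) = B ^ (k - Suc j) * V'" .
  moreover have "poly V' x = (\<Prod>i<Suc j. real (k - i)) * poly (pderiv B) x ^ Suc j * poly W x"
    if "poly B x = 0" for x
  proof -
    have "1 + real r = real k - real j"
      using r Suc.prems by linarith
    then show ?thesis
      using that V_root by (simp add: V'_def)
  qed
  ultimately show ?case
    by blast
qed

definition sq_minus_1 :: "real poly" where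
  "sq_minus_1 = [:-1, 0, 1:]"

definition one_minus_sq :: "real poly" where
  "one_minus_sq = [:1, 0, -1:]"

lemma poly_sq_minus_1 [simp]: "poly sq_minus_1 x = x\<^sup>2 - 1"
  by (simp add: sq_minus_1_def power2_eq_square)

lemma poly_one_minus_sq [simp]: "poly one_minus_sq x = 1 - x\<^sup>2"
  by (simp add: one_minus_sq_def power2_eq_square)

lemma lead_coeff_sq_minus_1: "lead_coeff sq_minus_1 = 1"
  and lead_coeff_one_minus_sq: "lead_coeff one_minus_sq = -1"
  by (simp_all add: sq_minus_1_def one_minus_sq_def)

lemma poly_pderiv_sq_minus_1: "poly (pderiv sq_minus_1) x = 2 * x"
  by (simp add: sq_minus_1_def pderiv_pCons)

definition rodrigues :: "nat \<Rightarrow> nat \<Rightarrow> real poly" where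
  "rodrigues l n = (pderiv ^^ n) (sq_minus_1 ^ l)"

lemma legendreP_rodrigues:
  "legendreP l m x = 1 / (2 ^ l * fact l) * sqrt (1 - x\<^sup>2) powi m * poly (rodrigues l (nat (int l + m))) x"
proof -
  have rodrigues_fun: "(\<lambda>y. (y\<^sup>2 - 1) ^ l) = (\<lambda>y. poly (sq_minus_1 ^ l) y)"
    by (simp add: fun_eq_iff poly_power)
  show ?thesis
    unfolding legendreP_def rodrigues_def rodrigues_fun higher_deriv_poly by simp
qed

lemma poly_rodrigues_pm1:
  assumes "n < l"
  shows "poly (rodrigues l n) 1 = 0" "poly (rodrigues l n) (-1) = 0"
proof -
  obtain V where "(pderiv ^^ n) (sq_minus_1 ^ l * 1) = sq_minus_1 ^ (l - n) * V"
    using higher_pderiv_power_mult[of n l sq_minus_1 1] assms by auto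
  then show "poly (rodrigues l n) 1 = 0" "poly (rodrigues l n) (-1) = 0"
    using assms by (simp_all add: rodrigues_def)
qed

lemma poly_rodrigues_at_1: "poly (rodrigues l l) 1 = fact l * 2 ^ l"
proof -
  obtain V where V: "(pderiv ^^ l) (sq_minus_1 ^ l * 1) = sq_minus_1 ^ (l - l) * V"
    and V_root: "\<forall>x. poly sq_minus_1 x = 0 \<longrightarrow>
      poly V x = (\<Prod>i<l. real (l - i)) * poly (pderiv sq_minus_1) x ^ l * poly 1 x"
    using higher_pderiv_power_mult[of l l sq_minus_1 1] by auto
  have "(\<Prod>i<l. real (l - i)) = fact l"
    by (simp add: fact_prod_rev atLeast0LessThan)
  then show ?thesis
    using V V_root by (simp add: rodrigues_def poly_pderiv_sq_minus_1)
qed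

lemma legendreP_l0_at_1: "legendreP l 0 1 = 1"
  by (simp add: legendreP_rodrigues poly_rodrigues_at_1)

lemma
  assumes "n \<le> 2 * l"
  shows degree_rodrigues: "degree (rodrigues l n) = 2 * l - n"
    and lead_coeff_rodrigues: "lead_coeff (rodrigues l n) = fact (2 * l) / fact (2 * l - n)"
proof -
  have "degree (sq_minus_1 ^ l) = 2 * l" "lead_coeff (sq_minus_1 ^ l) = 1"
    by (simp add: degree_power_eq sq_minus_1_def) (simp only: lead_coeff_power lead_coeff_sq_minus_1 power_one)
  then show "degree (rodrigues l n) = 2 * l - n"
    and "lead_coeff (rodrigues l n) = fact (2 * l) / fact (2 * l - n)"
    using lead_coeff_higher_pderiv[of n "sq_minus_1 ^ l"] assms
    by (simp_all add: rodrigues_def degree_higher_pderiv)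
qed

definition integral_poly :: "real poly \<Rightarrow> real" where
  "integral_poly p = integral {-1..1} (poly p)"

lemma integrable_poly [simp]: "poly p integrable_on {a..b::real}"
  by (intro integrable_continuous_interval continuous_intros)

lemma integral_poly_diff: "integral_poly (p - q) = integral_poly p - integral_poly q"
  unfolding integral_poly_def poly_diff[abs_def] by (simp add: integral_diff)

lemma integral_poly_add: "integral_poly (p + q) = integral_poly p + integral_poly q"
  unfolding integral_poly_def poly_add[abs_def] by (simp add: integral_add)

lemma integral_poly_smult: "integral_poly (smult c p) = c * integral_poly p"
  unfolding integral_poly_def poly_smult[abs_def] by simp

lemma integral_poly_pderiv: "integral_poly (pderiv p) = poly p 1 - poly p (-1)"
proof -
  have "(poly (pderiv p) has_integral (poly p 1 - poly p (-1))) {-1..1}"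
    by (rule fundamental_theorem_of_calculus)
      (auto intro!: DERIV_subset[OF poly_DERIV]
        simp: has_real_derivative_iff_has_vector_derivative[symmetric])
  then show ?thesis
    by (simp add: integral_poly_def integral_unique)
qed

lemma integral_poly_by_parts:
  "integral_poly (pderiv p * q) =
     poly p 1 * poly q 1 - poly p (-1) * poly q (-1) - integral_poly (p * pderiv q)"
  using integral_poly_pderiv[of "p * q"]
  by (simp add: pderiv_mult integral_poly_add mult.commute)

lemma integral_poly_higher_by_parts:
  assumes "\<forall>i<n. poly ((pderiv ^^ (n - 1 - i)) p) 1 * poly ((pderiv ^^ i) q) 1 = 0 \<and>
                 poly ((pderiv ^^ (n - 1 - i)) p) (-1) * poly ((pderiv ^^ i) q) (-1) = 0"
  shows "integral_poly ((pderiv ^^ n) p * q) = (-1) ^ n * integral_poly (p * (pderiv ^^ n) q)"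
  using assms
proof (induction n arbitrary: q)
  case (Suc n)
  have pderiv_shift: "(pderiv ^^ i) (pderiv q) = (pderiv ^^ Suc i) q" for i
    by (simp only: funpow_Suc_right comp_def)
  have "integral_poly ((pderiv ^^ Suc n) p * q) = - integral_poly ((pderiv ^^ n) p * pderiv q)"
    using integral_poly_by_parts[of "(pderiv ^^ n) p" q] Suc.prems[rule_format, of 0] by auto
  also have "integral_poly ((pderiv ^^ n) p * pderiv q) = (-1) ^ n * integral_poly (p * (pderiv ^^ n) (pderiv q))"
  proof (rule Suc.IH, intro allI impI)
    fix i
    assume "i < n"
    then show "poly ((pderiv ^^ (n - 1 - i)) p) 1 * poly ((pderiv ^^ i) (pderiv q)) 1 = 0 \<and>
        poly ((pderiv ^^ (n - 1 - i)) p) (-1) * poly ((pderiv ^^ i) (pderiv q)) (-1) = 0"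
      using Suc.prems[rule_format, of "Suc i"] unfolding pderiv_shift by simp
  qed
  finally show ?case
    by (simp add: pderiv_shift)
qed simp

lemma integral_poly_one_minus_sq_power_Suc:
  "integral_poly (one_minus_sq ^ Suc l) = integral_poly (one_minus_sq ^ l) * (2 * real l + 2) / (2 * real l + 3)"
proof -
  define x2 where "x2 = [:0, 0, 1::real:]"
  have "one_minus_sq ^ Suc l = one_minus_sq ^ l - one_minus_sq ^ l * x2"
    by (simp add: poly_eq_poly_eq_iff[symmetric] fun_eq_iff x2_def poly_power algebra_simps power2_eq_square)
  then have "integral_poly (one_minus_sq ^ Suc l) =
      integral_poly (one_minus_sq ^ l) - integral_poly (one_minus_sq ^ l * x2)"
    by (simp add: integral_poly_diff)
  moreover have "pderiv (one_minus_sq ^ Suc l) * [:0, 1:] = smult (-2 * (real l + 1)) (one_minus_sq ^ l * x2)"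
    unfolding pderiv_power_Suc
    by (simp add: poly_eq_poly_eq_iff[symmetric] fun_eq_iff one_minus_sq_def pderiv_pCons x2_def
        poly_power algebra_simps power2_eq_square)
  then have "-2 * (real l + 1) * integral_poly (one_minus_sq ^ l * x2) = - integral_poly (one_minus_sq ^ Suc l)"
    using integral_poly_by_parts[of "one_minus_sq ^ Suc l" "[:0, 1:]"]
    by (simp add: integral_poly_smult pderiv_pCons)
  ultimately show ?thesis
    by (simp add: field_simps)
qed

lemma integral_poly_one_minus_sq_power:
  "integral_poly (one_minus_sq ^ l) = 2 ^ (2 * l + 1) * (fact l)\<^sup>2 / fact (2 * l + 1)"
proof (induction l)
  case 0
  have "poly (1::real poly) = (\<lambda>x. 1)"
    by auto
  then show ?case
    by (simp add: integral_poly_def)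
next
  case (Suc l)
  define F :: real where "F = fact (2 * l + 1)"
  define a where "a = 2 * real l + 3"
  define b where "b = real l + 1"
  have pos: "F > 0" "a > 0" "b > 0"
    by (simp_all add: F_def a_def b_def)
  have expand: "fact (2 * Suc l + 1) = a * (2 * b) * F" "fact (Suc l) = b * fact l"
    "2 ^ (2 * Suc l + 1) = 4 * (2::real) ^ (2 * l + 1)" "2 * real l + 2 = 2 * b" "2 * real l + 3 = a"
    by (simp_all add: F_def a_def b_def algebra_simps)
  show ?case
    unfolding integral_poly_one_minus_sq_power_Suc Suc.IH F_def[symmetric] expand
    using pos by (simp add: field_simps power2_eq_square)
qed

text \<open>With \<open>n = l + m\<close>, the weighted square \<open>(1 - x\<^sup>2)\<^sup>m P\<^sup>2\<close> of \<open>P = rodrigues l n\<close> is written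
  as \<open>P \<cdot> S\<close>, where \<open>S\<close> has degree at most \<open>n\<close> and vanishes to order \<open>n - l\<close> at \<open>\<plusminus>1\<close>. Since
  \<open>(x\<^sup>2 - 1)\<^sup>l\<close> vanishes to order \<open>l\<close> there, \<open>n\<close> integrations by parts then move all derivatives
  onto \<open>S\<close>, leaving its leading coefficient.\<close>

definition rodrigues_cofactor :: "nat \<Rightarrow> int \<Rightarrow> real poly \<Rightarrow> bool" where
  "rodrigues_cofactor l m S \<longleftrightarrow>
     degree S \<le> nat (int l + m) \<and>
     coeff S (nat (int l + m)) = (-1) ^ nat \<bar>m\<bar> * fact (2 * l) / fact (nat (int l - m)) \<and>
     (\<forall>i < nat (int l + m) - l. poly ((pderiv ^^ i) S) 1 = 0 \<and> poly ((pderiv ^^ i) S) (-1) = 0) \<and>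
     (\<forall>x. -1 < x \<and> x < 1 \<longrightarrow> (1 - x\<^sup>2) powi m * (poly (rodrigues l (nat (int l + m))) x)\<^sup>2 =
        poly (rodrigues l (nat (int l + m)) * S) x)"

lemma rodrigues_cofactor_nonneg:
  assumes "0 \<le> m" "m \<le> int l"
  shows "rodrigues_cofactor l m (one_minus_sq ^ nat m * rodrigues l (nat (int l + m)))"
proof -
  define p where "p = nat m"
  define n where "n = nat (int l + m)"
  define S where "S = one_minus_sq ^ p * rodrigues l n"
  have m: "m = int p" and n: "n = l + p" and n_le: "n \<le> 2 * l"
    using assms by (auto simp: p_def n_def)
  have deg_P: "degree (rodrigues l n) = l - p"
    and lead_P: "lead_coeff (rodrigues l n) = fact (2 * l) / fact (l - p)"
    using degree_rodrigues[OF n_le] lead_coeff_rodrigues[OF n_le] n by auto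
  have deg_B: "degree (one_minus_sq ^ p) = 2 * p"
    and lead_B: "lead_coeff (one_minus_sq ^ p) = (-1) ^ p"
    by (simp add: degree_power_eq one_minus_sq_def) (simp only: lead_coeff_power lead_coeff_one_minus_sq)
  have deg_sum: "n = degree (one_minus_sq ^ p) + degree (rodrigues l n)"
    using deg_B deg_P n assms m by simp
  have "degree S \<le> n"
    using degree_mult_le[of "one_minus_sq ^ p" "rodrigues l n"] deg_sum by (simp add: S_def)
  moreover have "coeff S n = (-1) ^ nat \<bar>m\<bar> * fact (2 * l) / fact (nat (int l - m))"
  proof -
    have "coeff S (degree (one_minus_sq ^ p) + degree (rodrigues l n)) =
        lead_coeff (one_minus_sq ^ p) * lead_coeff (rodrigues l n)"
      unfolding S_def by (rule coeff_mult_degree_sum)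
    moreover have "nat (int l - m) = l - p"
      using m by simp
    ultimately show ?thesis
      using lead_B lead_P m by (simp flip: deg_sum)
  qed
  moreover have "poly ((pderiv ^^ i) S) 1 = 0 \<and> poly ((pderiv ^^ i) S) (-1) = 0" if "i < n - l" for i
  proof -
    have "i \<le> p"
      using that n by simp
    then obtain V where "(pderiv ^^ i) (one_minus_sq ^ p * rodrigues l n) = one_minus_sq ^ (p - i) * V"
      using higher_pderiv_power_mult[of i p one_minus_sq "rodrigues l n"] by blast
    then show ?thesis
      using that n by (simp add: S_def)
  qed
  moreover have "(1 - x\<^sup>2) powi m * (poly (rodrigues l n) x)\<^sup>2 = poly (rodrigues l n * S) x" for x
    unfolding S_def m by (simp add: power2_eq_square poly_power)
  ultimately show ?thesis
    unfolding rodrigues_cofactor_def n_def[symmetric] p_def[symmetric] S_def[symmetric] by blast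
qed

lemma rodrigues_cofactor_neg:
  assumes "m < 0" "- m \<le> int l"
  shows "\<exists>S. rodrigues_cofactor l m S"
proof -
  define p where "p = nat (- m)"
  define n where "n = nat (int l + m)"
  have m: "m = - int p" and n: "n = l - p" "p \<le> l" and n_le: "n \<le> 2 * l"
    using assms by (auto simp: p_def n_def)
  obtain V where "(pderiv ^^ n) (sq_minus_1 ^ l * 1) = sq_minus_1 ^ (l - n) * V"
    using higher_pderiv_power_mult[of n l sq_minus_1 1] n by auto
  then have PV: "rodrigues l n = sq_minus_1 ^ p * V"
    using n by (simp add: rodrigues_def)
  have "lead_coeff (rodrigues l n) \<noteq> 0"
    using lead_coeff_rodrigues[OF n_le] by simp
  then have "degree (rodrigues l n) = 2 * p + degree V"
    using PV by (auto simp: degree_mult_eq degree_power_eq sq_minus_1_def)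
  then have deg_V: "degree V = n"
    using degree_rodrigues[OF n_le] n by simp
  have "lead_coeff (rodrigues l n) = lead_coeff V"
    by (simp add: PV lead_coeff_mult lead_coeff_power sq_minus_1_def)
  then have lead_V: "lead_coeff V = fact (2 * l) / fact (l + p)"
    using lead_coeff_rodrigues[OF n_le] n by simp
  define S where "S = smult ((-1) ^ p) V"
  have "degree S \<le> n"
    using deg_V by (simp add: S_def)
  moreover have "coeff S n = (-1) ^ nat \<bar>m\<bar> * fact (2 * l) / fact (nat (int l - m))"
    using lead_V deg_V m by (simp add: S_def nat_add_distrib)
  moreover have "(1 - x\<^sup>2) powi m * (poly (rodrigues l n) x)\<^sup>2 = poly (rodrigues l n * S) x"
    if "-1 < x \<and> x < 1" for x
  proof -
    have "1 - x\<^sup>2 \<noteq> 0"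
      using that by (auto simp: power2_eq_1_iff)
    moreover have "(x * x - 1) ^ p * (x * x - 1) ^ p = (1 - x * x) ^ p * (1 - x * x) ^ p"
      by (simp add: power_mult_distrib[symmetric] algebra_simps)
    ultimately show ?thesis
      using m by (simp add: PV S_def poly_power power_int_def power_mult_distrib
          power2_eq_square field_simps flip: power_minus)
  qed
  ultimately show ?thesis
    unfolding rodrigues_cofactor_def n_def[symmetric] using n by auto
qed

lemma integral_poly_rodrigues_mult:
  assumes "\<bar>m\<bar> \<le> int l" and S: "rodrigues_cofactor l m S"
  defines "n \<equiv> nat (int l + m)"
  shows "integral_poly (rodrigues l n * S) =
    fact n * 2 ^ (2 * l + 1) * (fact l)\<^sup>2 / ((2 * real l + 1) * fact (nat (int l - m)))"
proof -
  have deg_S: "degree S \<le> n" and coeff_S: "coeff S n = (-1) ^ nat \<bar>m\<bar> * fact (2 * l) / fact (nat (int l - m))"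
    and S_pm1: "\<forall>i<n - l. poly ((pderiv ^^ i) S) 1 = 0 \<and> poly ((pderiv ^^ i) S) (-1) = 0"
    using S by (simp_all add: rodrigues_cofactor_def n_def)
  have boundary: "poly ((pderiv ^^ (n - 1 - i)) (sq_minus_1 ^ l)) 1 * poly ((pderiv ^^ i) S) 1 = 0 \<and>
      poly ((pderiv ^^ (n - 1 - i)) (sq_minus_1 ^ l)) (-1) * poly ((pderiv ^^ i) S) (-1) = 0"
    if "i < n" for i
  proof (cases "i < n - l")
    case True
    then show ?thesis
      using S_pm1 by simp
  next
    case False
    then have "n - 1 - i < l"
      using that by linarith
    then show ?thesis
      using poly_rodrigues_pm1 by (simp add: rodrigues_def)
  qed
  have "integral_poly (rodrigues l n * S) = (-1) ^ n * integral_poly (sq_minus_1 ^ l * (pderiv ^^ n) S)"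
    unfolding rodrigues_def using boundary by (intro integral_poly_higher_by_parts) auto
  also have "sq_minus_1 ^ l * (pderiv ^^ n) S = smult ((-1) ^ l * fact n * coeff S n) (one_minus_sq ^ l)"
    unfolding higher_pderiv_eq_const[OF deg_S]
    by (simp add: poly_eq_poly_eq_iff[symmetric] fun_eq_iff poly_power power_mult_distrib[symmetric])
  finally have "integral_poly (rodrigues l n * S) =
      ((-1) ^ (n + l + nat \<bar>m\<bar>)) * fact n * fact (2 * l) / fact (nat (int l - m)) *
      integral_poly (one_minus_sq ^ l)"
    by (simp add: integral_poly_smult coeff_S power_add)
  also have "n + l + nat \<bar>m\<bar> = (if m \<ge> 0 then 2 * (l + nat m) else 2 * l)"
    using assms(1) by (auto simp: n_def)
  finally have "integral_poly (rodrigues l n * S) =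
      fact n * fact (2 * l) / fact (nat (int l - m)) * (2 ^ (2 * l + 1) * (fact l)\<^sup>2 / fact (2 * l + 1))"
    by (simp add: integral_poly_one_minus_sq_power)
  also have "fact (2 * l + 1) = (2 * real l + 1) * fact (2 * l)"
    by simp
  finally show ?thesis
    by (simp add: mult_ac del: fact_Suc)
qed

lemma legendreP_square_poly:
  assumes "\<bar>m\<bar> \<le> int l"
  shows "\<exists>R. (\<forall>x. -1 < x \<and> x < 1 \<longrightarrow> (legendreP l m x)\<^sup>2 = poly R x) \<and>
      integral_poly R = 2 * fact (nat (int l + m)) / ((2 * real l + 1) * fact (nat (int l - m)))"
proof -
  define n where "n = nat (int l + m)"
  obtain S where S: "rodrigues_cofactor l m S"
    using rodrigues_cofactor_nonneg[of m l] rodrigues_cofactor_neg[of m l] assms by fastforce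
  then have weighted: "\<forall>x. -1 < x \<and> x < 1 \<longrightarrow>
      (1 - x\<^sup>2) powi m * (poly (rodrigues l n) x)\<^sup>2 = poly (rodrigues l n * S) x"
    by (simp add: rodrigues_cofactor_def n_def)
  define q :: real where "q = 2 ^ l * fact l"
  define R where "R = smult ((1 / q)\<^sup>2) (rodrigues l n * S)"
  have "(legendreP l m x)\<^sup>2 = poly R x" if "-1 < x \<and> x < 1" for x
  proof -
    have "x\<^sup>2 \<le> 1"
      using that by (simp add: abs_square_le_1 abs_le_iff)
    have "(sqrt (1 - x\<^sup>2) powi m)\<^sup>2 = sqrt (1 - x\<^sup>2) powi (m * 2)"
      by (simp add: power_int_power')
    also have "\<dots> = (sqrt (1 - x\<^sup>2) ^ 2) powi m"
      by (simp add: power_int_power mult.commute)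
    also have "sqrt (1 - x\<^sup>2) ^ 2 = 1 - x\<^sup>2"
      using \<open>x\<^sup>2 \<le> 1\<close> by simp
    finally have "(legendreP l m x)\<^sup>2 = (1 / q)\<^sup>2 * ((1 - x\<^sup>2) powi m * (poly (rodrigues l n) x)\<^sup>2)"
      unfolding legendreP_rodrigues n_def[symmetric] q_def by (simp only: power_mult_distrib mult.assoc)
    then show ?thesis
      using weighted that by (simp add: R_def)
  qed
  moreover have "integral_poly R = 2 * fact n / ((2 * real l + 1) * fact (nat (int l - m)))"
  proof -
    have "2 ^ (2 * l + 1) * (fact l)\<^sup>2 = 2 * q\<^sup>2"
      by (simp add: q_def power_mult_distrib power_even_eq)
    moreover have "q \<noteq> 0"
      by (simp add: q_def)
    ultimately show ?thesis
      using integral_poly_rodrigues_mult[OF assms S, folded n_def]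
      by (simp add: R_def integral_poly_smult field_simps)
  qed
  ultimately show ?thesis
    unfolding n_def by blast
qed

section \<open>Normalisation of the spherical harmonics\<close>

lemma exists_pderiv_eq: "\<exists>q. pderiv q = (p :: real poly)"
proof -
  define q where "q = (\<Sum>i\<le>degree p. monom (coeff p i / real (Suc i)) (Suc i))"
  have "pderiv q = (\<Sum>i\<le>degree p. pderiv (monom (coeff p i / real (Suc i)) (Suc i)))"
    unfolding q_def using higher_pderiv_sum[of 1] by simp
  also have "\<dots> = (\<Sum>i\<le>degree p. monom (coeff p i) i)"
    by (simp add: pderiv_monom)
  finally show ?thesis
    by (metis poly_as_sum_of_monoms)
qed

lemma cos_in_open_interval:
  assumes "0 < \<theta>" "\<theta> < pi"
  shows "-1 < cos \<theta>" "cos \<theta> < 1"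
  using cos_monotone_0_pi[of 0 \<theta>] cos_monotone_0_pi[of \<theta> pi] assms by auto

lemma has_integral_poly_cos_sin:
  "((\<lambda>\<theta>. poly p (cos \<theta>) * sin \<theta>) has_integral integral_poly p) {0..pi}"
proof -
  obtain q where q: "pderiv q = p"
    using exists_pderiv_eq by blast
  have "((\<lambda>\<theta>. - poly q (cos \<theta>)) has_real_derivative poly p (cos \<theta>) * sin \<theta>) (at \<theta> within {0..pi})"
    for \<theta>
    using q by (auto intro!: derivative_eq_intros)
  then have "((\<lambda>\<theta>. poly p (cos \<theta>) * sin \<theta>) has_integral (- poly q (cos pi) - - poly q (cos 0))) {0..pi}"
    by (intro fundamental_theorem_of_calculus) (auto simp: has_real_derivative_iff_has_vector_derivative[symmetric])
  then show ?thesis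
    using integral_poly_pderiv[of q] q by simp
qed

lemma nn_integral_poly_cos_sin:
  fixes f :: "real \<Rightarrow> real"
  assumes nonneg: "\<And>x. -1 < x \<Longrightarrow> x < 1 \<Longrightarrow> poly p x \<ge> 0"
    and f: "\<And>\<theta>. 0 < \<theta> \<Longrightarrow> \<theta> < pi \<Longrightarrow> f \<theta> = poly p (cos \<theta>) * sin \<theta>" and "f 0 = 0"
  shows "(\<integral>\<^sup>+\<theta>\<in>{0..<pi}. ennreal (f \<theta>) \<partial>lborel) = ennreal (integral_poly p)"
proof -
  define g where "g \<theta> = poly p (cos \<theta>) * sin \<theta>" for \<theta>
  have "0 \<le> g \<theta>" if "\<theta> \<in> {0..pi}" for \<theta>
  proof (cases "\<theta> = 0 \<or> \<theta> = pi")
    case False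
    then have "0 < \<theta>" "\<theta> < pi"
      using that by auto
    then show ?thesis
      using nonneg[OF cos_in_open_interval] sin_gt_zero by (simp add: g_def less_imp_le)
  qed (auto simp: g_def)
  then have "(\<integral>\<^sup>+\<theta>. ennreal (g \<theta>) * indicator {0..pi} \<theta> \<partial>lborel) = ennreal (integral_poly p)"
    using has_integral_poly_cos_sin[of p] unfolding g_def[symmetric]
    by (rule nn_integral_has_integral_lebesgue')
  moreover have "AE \<theta> in lborel. ennreal (f \<theta>) * indicator {0..<pi} \<theta> = ennreal (g \<theta>) * indicator {0..pi} \<theta>"
    using AE_lborel_singleton[of pi]
  proof eventually_elim
    case (elim \<theta>)
    show ?case
    proof (cases "0 < \<theta> \<and> \<theta> < pi")
      case False
      then have "\<theta> = 0 \<or> \<theta> \<notin> {0..pi}"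
        using elim by auto
      then show ?thesis
        using \<open>f 0 = 0\<close> by (auto simp: g_def)
    qed (simp add: f g_def)
  qed
  ultimately show ?thesis
    by (simp add: nn_integral_cong_AE)
qed

lemma norm_sphY: "norm (sphY l m \<theta> \<phi>) = \<bar>dlm l m * legendreP l m (cos \<theta>)\<bar>"
proof -
  have "\<i> * of_int m * of_real \<phi> = \<i> * of_real (real_of_int m * \<phi>)"
    by simp
  then show ?thesis
    unfolding sphY_def by (simp only: norm_mult norm_exp_i_times norm_of_real)
qed

lemma dlm_square:
  "\<bar>m\<bar> \<le> int l \<Longrightarrow> (dlm l m)\<^sup>2 = (2 * real l + 1) * fact (nat (int l - m)) / (4 * pi * fact (nat (int l + m)))"
  by (simp add: dlm_def power_mult_distrib power_even_eq[symmetric] mult.commute[of 2])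

lemma nn_integral_sphY_square:
  assumes "\<bar>m\<bar> \<le> int l"
  shows "(\<integral>\<^sup>+\<theta>\<in>{0..<pi}. (\<integral>\<^sup>+\<phi>\<in>{0..<2*pi}. ennreal ((norm (sphY l m \<theta> \<phi>))\<^sup>2 * sin \<theta>) \<partial>lborel) \<partial>lborel) = 1"
proof -
  obtain R where R: "\<And>x. -1 < x \<and> x < 1 \<Longrightarrow> (legendreP l m x)\<^sup>2 = poly R x"
    and int_R: "integral_poly R = 2 * fact (nat (int l + m)) / ((2 * real l + 1) * fact (nat (int l - m)))"
    using legendreP_square_poly[OF assms] by blast
  define c where "c = 2 * pi * (dlm l m)\<^sup>2"
  have integral_phi: "(\<integral>\<^sup>+\<phi>\<in>{0..<2*pi}. ennreal a \<partial>lborel) = ennreal (2 * pi * a)" for a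
    by (subst nn_integral_cmult_indicator) (simp_all add: ennreal_mult'' mult.commute)
  have "(\<integral>\<^sup>+\<phi>\<in>{0..<2*pi}. ennreal ((norm (sphY l m \<theta> \<phi>))\<^sup>2 * sin \<theta>) \<partial>lborel) =
      ennreal (c * (legendreP l m (cos \<theta>))\<^sup>2 * sin \<theta>)" for \<theta>
    unfolding norm_sphY integral_phi by (simp add: c_def power_mult_distrib mult_ac)
  moreover have "(\<integral>\<^sup>+\<theta>\<in>{0..<pi}. ennreal (c * (legendreP l m (cos \<theta>))\<^sup>2 * sin \<theta>) \<partial>lborel) =
      ennreal (integral_poly (smult c R))"
  proof (rule nn_integral_poly_cos_sin)
    show "poly (smult c R) x \<ge> 0" if "-1 < x" "x < 1" for x
      using R[of x] that by (simp add: c_def flip: R[of x])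
    show "c * (legendreP l m (cos \<theta>))\<^sup>2 * sin \<theta> = poly (smult c R) (cos \<theta>) * sin \<theta>"
      if "0 < \<theta>" "\<theta> < pi" for \<theta>
      using R[of "cos \<theta>"] cos_in_open_interval[OF that] by simp
  qed simp
  moreover have "integral_poly (smult c R) = 1"
    using pi_gt_zero by (simp add: integral_poly_smult int_R c_def dlm_square[OF assms])
  ultimately show ?thesis
    by simp
qed

section \<open>Second moments of the random field\<close>

lemma
  assumes "iso_gauss_field M a Cl"
  shows iso_gauss_field_prob_space: "prob_space M"
    and iso_gauss_field_measurable: "\<And>l m. \<bar>m\<bar> \<le> int l \<Longrightarrow> a l m \<in> borel_measurable M"
    and iso_gauss_field_square_integrable:
      "\<And>l m. \<bar>m\<bar> \<le> int l \<Longrightarrow> integrable M (\<lambda>\<omega>. (norm (a l m \<omega>))\<^sup>2)"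
    and iso_gauss_field_covariance: "\<And>l m l' m'. \<bar>m\<bar> \<le> int l \<Longrightarrow> \<bar>m'\<bar> \<le> int l' \<Longrightarrow>
        integral\<^sup>L M (\<lambda>\<omega>. a l m \<omega> * cnj (a l' m' \<omega>)) =
          (if l = l' \<and> m = m' then complex_of_real (Cl l) else 0)"
    and iso_gauss_field_summable: "summable (\<lambda>l. (2 * real l + 1) * Cl l)"
  using assms unfolding iso_gauss_field_def by auto

lemma borel_measurable_cnj [measurable]:
  "f \<in> borel_measurable M \<Longrightarrow> (\<lambda>x. cnj (f x)) \<in> borel_measurable M"
  using borel_measurable_continuous_onI[OF continuous_on_cnj[OF continuous_on_id]]
  by (rule measurable_compose[rotated])

lemma integrable_mult_cnj:
  fixes f g :: "'a \<Rightarrow> complex"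
  assumes "f \<in> borel_measurable M" "g \<in> borel_measurable M"
    and "integrable M (\<lambda>x. (norm (f x))\<^sup>2)" "integrable M (\<lambda>x. (norm (g x))\<^sup>2)"
  shows "integrable M (\<lambda>x. f x * cnj (g x))"
proof (rule Bochner_Integration.integrable_bound)
  show "integrable M (\<lambda>x. (norm (f x))\<^sup>2 + (norm (g x))\<^sup>2)"
    using assms(3,4) by simp
  have "x * y \<le> x\<^sup>2 + y\<^sup>2" if "0 \<le> x" "0 \<le> y" for x y :: real
    using sum_squares_bound[of x y] mult_nonneg_nonneg[OF that] by linarith
  then show "AE x in M. norm (f x * cnj (g x)) \<le> norm ((norm (f x))\<^sup>2 + (norm (g x))\<^sup>2)"
    by (intro AE_I2) (simp add: norm_mult)
qed (use assms(1,2) in measurable)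

lemma iso_gauss_field_Cl_nonneg:
  assumes "iso_gauss_field M a Cl"
  shows "Cl l \<ge> 0"
proof -
  have "complex_of_real (Cl l) = integral\<^sup>L M (\<lambda>\<omega>. a l 0 \<omega> * cnj (a l 0 \<omega>))"
    using iso_gauss_field_covariance[OF assms, of 0 l 0 l] by simp
  also have "\<dots> = integral\<^sup>L M (\<lambda>\<omega>. complex_of_real ((norm (a l 0 \<omega>))\<^sup>2))"
    by (simp only: complex_norm_square)
  finally have "Cl l = integral\<^sup>L M (\<lambda>\<omega>. (norm (a l 0 \<omega>))\<^sup>2)"
    by (simp only: integral_complex_of_real of_real_eq_iff)
  then show ?thesis
    by simp
qed

lemma iso_gauss_field_summable_shift:
  assumes "iso_gauss_field M a Cl"
  shows "summable (\<lambda>l. (2 * real (l + L) + 1) * Cl (l + L))"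
  using iso_gauss_field_summable[OF assms]
  by (rule iffD2[OF summable_iff_shift[of "\<lambda>l. (2 * real l + 1) * Cl l" L]])

lemma nn_integral_norm_sum_square:
  assumes field: "iso_gauss_field M a Cl"
    and I: "finite I" "\<forall>i\<in>I. \<bar>snd i\<bar> \<le> int (fst i)"
  shows "(\<integral>\<^sup>+\<omega>. ennreal ((norm (\<Sum>i\<in>I. w i * a (fst i) (snd i) \<omega>))\<^sup>2) \<partial>M) =
         ennreal (\<Sum>i\<in>I. (norm (w i))\<^sup>2 * Cl (fst i))"
proof -
  define Z where "Z \<omega> = (\<Sum>i\<in>I. w i * a (fst i) (snd i) \<omega>)" for \<omega>
  have meas: "\<And>i. i \<in> I \<Longrightarrow> a (fst i) (snd i) \<in> borel_measurable M"
    using iso_gauss_field_measurable[OF field] I(2) by auto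
  have Z_cnj: "Z \<omega> * cnj (Z \<omega>) =
      (\<Sum>i\<in>I. \<Sum>j\<in>I. (w i * cnj (w j)) * (a (fst i) (snd i) \<omega> * cnj (a (fst j) (snd j) \<omega>)))" for \<omega>
    unfolding Z_def cnj_sum sum_product by (intro sum.cong refl) (simp add: mult_ac)
  have int_ij: "integrable M (\<lambda>\<omega>. a (fst i) (snd i) \<omega> * cnj (a (fst j) (snd j) \<omega>))"
    if "i \<in> I" "j \<in> I" for i j
    using that I(2) meas by (intro integrable_mult_cnj iso_gauss_field_square_integrable[OF field]) auto
  have "integral\<^sup>L M (\<lambda>\<omega>. complex_of_real ((norm (Z \<omega>))\<^sup>2)) = integral\<^sup>L M (\<lambda>\<omega>. Z \<omega> * cnj (Z \<omega>))"
    by (simp only: complex_norm_square)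
  also have "\<dots> =
      (\<Sum>i\<in>I. \<Sum>j\<in>I. (w i * cnj (w j)) * integral\<^sup>L M (\<lambda>\<omega>. a (fst i) (snd i) \<omega> * cnj (a (fst j) (snd j) \<omega>)))"
    unfolding Z_cnj using int_ij
    by (simp add: Bochner_Integration.integral_sum integrable_sum integrable_mult_right)
  also have "\<dots> = (\<Sum>i\<in>I. \<Sum>j\<in>I. if i = j then (w i * cnj (w j)) * complex_of_real (Cl (fst i)) else 0)"
    using I(2) by (intro sum.cong refl) (auto simp: iso_gauss_field_covariance[OF field] prod_eq_iff)
  also have "\<dots> = (\<Sum>i\<in>I. complex_of_real ((norm (w i))\<^sup>2 * Cl (fst i)))"
    using I(1) by (simp add: complex_norm_square[symmetric])
  also have "\<dots> = complex_of_real (\<Sum>i\<in>I. (norm (w i))\<^sup>2 * Cl (fst i))"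
    by (simp only: of_real_sum)
  finally have "integral\<^sup>L M (\<lambda>\<omega>. (norm (Z \<omega>))\<^sup>2) = (\<Sum>i\<in>I. (norm (w i))\<^sup>2 * Cl (fst i))"
    by (simp only: integral_complex_of_real of_real_eq_iff)
  moreover have "integrable M (\<lambda>\<omega>. complex_of_real ((norm (Z \<omega>))\<^sup>2))"
    unfolding complex_norm_square Z_cnj using int_ij by (auto intro!: integrable_sum integrable_mult_right)
  then have "integrable M (\<lambda>\<omega>. (norm (Z \<omega>))\<^sup>2)"
    by (simp only: complex_of_real_integrable_eq)
  ultimately show ?thesis
    unfolding Z_def[symmetric] by (simp add: nn_integral_eq_integral)
qed

section \<open>The squared norm of \<open>L\<^sub>2(\<Omega> \<times> S\<^sup>2)\<close>\<close>

lemma borel_measurable_poly [measurable]: "(\<lambda>x. poly p (x::real)) \<in> borel_measurable borel"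
  by (intro borel_measurable_continuous_onI continuous_intros)

lemma borel_measurable_legendreP [measurable]: "(\<lambda>x. legendreP l m x) \<in> borel_measurable borel"
  unfolding legendreP_rodrigues power_int_def by measurable

lemma borel_measurable_sphY [measurable]:
  "(\<lambda>y. sphY l m (fst y) (snd y)) \<in> borel_measurable (lborel \<Otimes>\<^sub>M lborel)"
  unfolding sphY_def by measurable

lemma sigma_finite_lborel_pair: "sigma_finite_measure (lborel \<Otimes>\<^sub>M lborel :: (real \<times> real) measure)"
  by (intro sigma_finite_pair_measure lborel.sigma_finite_measure_axioms)

lemma nn_integral_sphere_chart:
  assumes [measurable]: "g \<in> borel_measurable (lborel \<Otimes>\<^sub>M lborel)"
  shows "(\<integral>\<^sup>+\<theta>\<in>{0..<pi}. (\<integral>\<^sup>+\<phi>\<in>{0..<2*pi}. g (\<theta>, \<phi>) \<partial>lborel) \<partial>lborel) =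
    (\<integral>\<^sup>+y\<in>{0..<pi} \<times> {0..<2*pi}. g y \<partial>(lborel \<Otimes>\<^sub>M lborel))"
proof -
  have "(\<integral>\<^sup>+y\<in>{0..<pi} \<times> {0..<2*pi}. g y \<partial>(lborel \<Otimes>\<^sub>M lborel)) =
      (\<integral>\<^sup>+\<theta>. (\<integral>\<^sup>+\<phi>. g (\<theta>, \<phi>) * indicator ({0..<pi} \<times> {0..<2*pi}) (\<theta>, \<phi>) \<partial>lborel) \<partial>lborel)"
    by (rule lborel.nn_integral_fst[symmetric]) measurable
  also have "\<dots> = (\<integral>\<^sup>+\<theta>\<in>{0..<pi}. (\<integral>\<^sup>+\<phi>\<in>{0..<2*pi}. g (\<theta>, \<phi>) \<partial>lborel) \<partial>lborel)"
    by (intro nn_integral_cong) (simp add: indicator_times split: split_indicator)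
  finally show ?thesis ..
qed

lemma nn_integral_sphY_square_pair:
  assumes "\<bar>m\<bar> \<le> int l"
  shows "(\<integral>\<^sup>+y\<in>{0..<pi} \<times> {0..<2*pi}. ennreal ((norm (sphY l m (fst y) (snd y)))\<^sup>2 * sin (fst y))
    \<partial>(lborel \<Otimes>\<^sub>M lborel)) = 1"
  using nn_integral_sphere_chart[of "\<lambda>y. ennreal ((norm (sphY l m (fst y) (snd y)))\<^sup>2 * sin (fst y))"]
    nn_integral_sphY_square[OF assms] by simp

definition L2_density :: "('a \<Rightarrow> real \<Rightarrow> real \<Rightarrow> complex) \<Rightarrow> 'a \<times> real \<times> real \<Rightarrow> ennreal" where
  "L2_density X z = ennreal ((norm (X (fst z) (fst (snd z)) (snd (snd z))))\<^sup>2 * sin (fst (snd z))) *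
     indicator ({0..<pi} \<times> {0..<2*pi}) (snd z)"

lemma borel_measurable_L2_density:
  assumes "(\<lambda>(\<omega>, \<theta>, \<phi>). X \<omega> \<theta> \<phi>) \<in> borel_measurable (M \<Otimes>\<^sub>M (lborel \<Otimes>\<^sub>M lborel))"
  shows "L2_density X \<in> borel_measurable (M \<Otimes>\<^sub>M (lborel \<Otimes>\<^sub>M lborel))"
proof -
  have [measurable]: "(\<lambda>z. X (fst z) (fst (snd z)) (snd (snd z))) \<in> borel_measurable (M \<Otimes>\<^sub>M (lborel \<Otimes>\<^sub>M lborel))"
    using assms by (simp add: split_beta')
  show ?thesis
    unfolding L2_density_def by measurable
qed

lemma L2sq_eq_nn_integral_pair:
  assumes X: "(\<lambda>(\<omega>, \<theta>, \<phi>). X \<omega> \<theta> \<phi>) \<in> borel_measurable (M \<Otimes>\<^sub>M (lborel \<Otimes>\<^sub>M lborel))"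
  shows "L2sq M X = (\<integral>\<^sup>+ z. L2_density X z \<partial>(M \<Otimes>\<^sub>M (lborel \<Otimes>\<^sub>M lborel)))"
proof -
  have "(\<integral>\<^sup>+\<theta>\<in>{0..<pi}. (\<integral>\<^sup>+\<phi>\<in>{0..<2*pi}. ennreal ((norm (X \<omega> \<theta> \<phi>))\<^sup>2 * sin \<theta>) \<partial>lborel) \<partial>lborel) =
      (\<integral>\<^sup>+ y. L2_density X (\<omega>, y) \<partial>(lborel \<Otimes>\<^sub>M lborel))" if "\<omega> \<in> space M" for \<omega>
  proof -
    have [measurable]: "(\<lambda>y. X \<omega> (fst y) (snd y)) \<in> borel_measurable (lborel \<Otimes>\<^sub>M lborel)"
      using measurable_compose_Pair1[OF that X] by (simp add: split_beta')
    have "(\<lambda>y. ennreal ((norm (X \<omega> (fst y) (snd y)))\<^sup>2 * sin (fst y))) \<in> borel_measurable (lborel \<Otimes>\<^sub>M lborel)"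
      by measurable
    from nn_integral_sphere_chart[OF this] show ?thesis
      by (simp add: L2_density_def)
  qed
  then have "L2sq M X = (\<integral>\<^sup>+\<omega>. (\<integral>\<^sup>+ y. L2_density X (\<omega>, y) \<partial>(lborel \<Otimes>\<^sub>M lborel)) \<partial>M)"
    unfolding L2sq_def by (intro nn_integral_cong) simp
  also have "\<dots> = (\<integral>\<^sup>+ z. L2_density X z \<partial>(M \<Otimes>\<^sub>M (lborel \<Otimes>\<^sub>M lborel)))"
    by (rule sigma_finite_measure.nn_integral_fst[OF sigma_finite_lborel_pair borel_measurable_L2_density[OF X]])
  finally show ?thesis .
qed

lemma L2sq_eq_nn_integral_expectation:
  assumes "sigma_finite_measure M"
    and X: "(\<lambda>(\<omega>, \<theta>, \<phi>). X \<omega> \<theta> \<phi>) \<in> borel_measurable (M \<Otimes>\<^sub>M (lborel \<Otimes>\<^sub>M lborel))"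
  shows "L2sq M X = (\<integral>\<^sup>+ y. (\<integral>\<^sup>+ \<omega>. L2_density X (\<omega>, y) \<partial>M) \<partial>(lborel \<Otimes>\<^sub>M lborel))"
proof -
  interpret pair_sigma_finite M "lborel \<Otimes>\<^sub>M lborel :: (real \<times> real) measure"
    by (intro pair_sigma_finite.intro assms(1) sigma_finite_lborel_pair)
  show ?thesis
    unfolding L2sq_eq_nn_integral_pair[OF X]
    by (rule nn_integral_snd[OF borel_measurable_L2_density[OF X], symmetric])
qed

lemma ennreal_norm_add_square_le:
  fixes p q :: "'a::real_normed_vector"
  assumes "s \<ge> 0"
  shows "ennreal ((norm (p + q))\<^sup>2 * s) \<le> 2 * ennreal ((norm p)\<^sup>2 * s) + 2 * ennreal ((norm q)\<^sup>2 * s)"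
proof -
  have "(norm (p + q))\<^sup>2 \<le> (norm p + norm q)\<^sup>2"
    by (simp add: norm_triangle_ineq power_mono)
  also have "\<dots> \<le> 2 * (norm p)\<^sup>2 + 2 * (norm q)\<^sup>2"
    using sum_squares_bound[of "norm p" "norm q"] by (simp add: power2_eq_square algebra_simps)
  finally have "(norm (p + q))\<^sup>2 * s \<le> (2 * (norm p)\<^sup>2 + 2 * (norm q)\<^sup>2) * s"
    using assms by (rule mult_right_mono)
  then have "ennreal ((norm (p + q))\<^sup>2 * s) \<le> ennreal (2 * ((norm p)\<^sup>2 * s)) + ennreal (2 * ((norm q)\<^sup>2 * s))"
    using assms by (simp add: algebra_simps ennreal_plus[symmetric] del: ennreal_plus)
  then show ?thesis
    by (simp only: ennreal_mult'[of 2] ennreal_numeral zero_le_numeral)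
qed

lemma L2sq_diff_le:
  assumes X: "(\<lambda>(\<omega>, \<theta>, \<phi>). X \<omega> \<theta> \<phi>) \<in> borel_measurable (M \<Otimes>\<^sub>M (lborel \<Otimes>\<^sub>M lborel))"
    and Y: "(\<lambda>(\<omega>, \<theta>, \<phi>). Y \<omega> \<theta> \<phi>) \<in> borel_measurable (M \<Otimes>\<^sub>M (lborel \<Otimes>\<^sub>M lborel))"
    and Z: "(\<lambda>(\<omega>, \<theta>, \<phi>). Z \<omega> \<theta> \<phi>) \<in> borel_measurable (M \<Otimes>\<^sub>M (lborel \<Otimes>\<^sub>M lborel))"
  shows "L2sq M (\<lambda>\<omega> \<theta> \<phi>. X \<omega> \<theta> \<phi> - Z \<omega> \<theta> \<phi>)
    \<le> 2 * L2sq M (\<lambda>\<omega> \<theta> \<phi>. X \<omega> \<theta> \<phi> - Y \<omega> \<theta> \<phi>) + 2 * L2sq M (\<lambda>\<omega> \<theta> \<phi>. Y \<omega> \<theta> \<phi> - Z \<omega> \<theta> \<phi>)"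
proof -
  have diff: "(\<lambda>(\<omega>, \<theta>, \<phi>). A \<omega> \<theta> \<phi> - B \<omega> \<theta> \<phi>) \<in> borel_measurable (M \<Otimes>\<^sub>M (lborel \<Otimes>\<^sub>M lborel))"
    if "(\<lambda>(\<omega>, \<theta>, \<phi>). A \<omega> \<theta> \<phi>) \<in> borel_measurable (M \<Otimes>\<^sub>M (lborel \<Otimes>\<^sub>M lborel))"
       "(\<lambda>(\<omega>, \<theta>, \<phi>). B \<omega> \<theta> \<phi>) \<in> borel_measurable (M \<Otimes>\<^sub>M (lborel \<Otimes>\<^sub>M lborel))"
    for A B :: "_ \<Rightarrow> real \<Rightarrow> real \<Rightarrow> complex"
    using borel_measurable_diff[OF that] by (simp add: case_prod_beta')
  have "L2_density (\<lambda>\<omega> \<theta> \<phi>. X \<omega> \<theta> \<phi> - Z \<omega> \<theta> \<phi>) z \<le>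
      2 * L2_density (\<lambda>\<omega> \<theta> \<phi>. X \<omega> \<theta> \<phi> - Y \<omega> \<theta> \<phi>) z + 2 * L2_density (\<lambda>\<omega> \<theta> \<phi>. Y \<omega> \<theta> \<phi> - Z \<omega> \<theta> \<phi>) z"
    for z
    using ennreal_norm_add_square_le[of "sin (fst (snd z))" "X (fst z) (fst (snd z)) (snd (snd z)) - Y (fst z) (fst (snd z)) (snd (snd z))"
        "Y (fst z) (fst (snd z)) (snd (snd z)) - Z (fst z) (fst (snd z)) (snd (snd z))"]
    by (auto simp: L2_density_def sin_ge_zero split: split_indicator)
  then have "(\<integral>\<^sup>+ z. L2_density (\<lambda>\<omega> \<theta> \<phi>. X \<omega> \<theta> \<phi> - Z \<omega> \<theta> \<phi>) z \<partial>(M \<Otimes>\<^sub>M (lborel \<Otimes>\<^sub>M lborel))) \<le>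
      (\<integral>\<^sup>+ z. 2 * L2_density (\<lambda>\<omega> \<theta> \<phi>. X \<omega> \<theta> \<phi> - Y \<omega> \<theta> \<phi>) z
        + 2 * L2_density (\<lambda>\<omega> \<theta> \<phi>. Y \<omega> \<theta> \<phi> - Z \<omega> \<theta> \<phi>) z \<partial>(M \<Otimes>\<^sub>M (lborel \<Otimes>\<^sub>M lborel)))"
    by (intro nn_integral_mono)
  also have "\<dots> = 2 * L2sq M (\<lambda>\<omega> \<theta> \<phi>. X \<omega> \<theta> \<phi> - Y \<omega> \<theta> \<phi>) + 2 * L2sq M (\<lambda>\<omega> \<theta> \<phi>. Y \<omega> \<theta> \<phi> - Z \<omega> \<theta> \<phi>)"
    using borel_measurable_L2_density[OF diff[OF X Y]] borel_measurable_L2_density[OF diff[OF Y Z]]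
    by (simp add: nn_integral_add nn_integral_cmult L2sq_eq_nn_integral_pair diff X Y Z)
  finally show ?thesis
    by (simp add: L2sq_eq_nn_integral_pair diff X Z)
qed

lemma borel_measurable_harmonic_sum:
  assumes field: "iso_gauss_field M a Cl" and I: "\<forall>i\<in>I. \<bar>snd i\<bar> \<le> int (fst i)"
  shows "(\<lambda>(\<omega>, \<theta>, \<phi>). \<Sum>i\<in>I. w i * sphY (fst i) (snd i) \<theta> \<phi> * a (fst i) (snd i) \<omega>)
     \<in> borel_measurable (M \<Otimes>\<^sub>M (lborel \<Otimes>\<^sub>M lborel))"
proof -
  have [measurable]: "i \<in> I \<Longrightarrow> a (fst i) (snd i) \<in> borel_measurable M" for i
    using iso_gauss_field_measurable[OF field] I by auto
  have [measurable]: "(\<lambda>z. sphY l m (fst (snd z)) (snd (snd z))) \<in> borel_measurable (M \<Otimes>\<^sub>M (lborel \<Otimes>\<^sub>M lborel))"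
    for l m
    using measurable_compose[OF measurable_snd borel_measurable_sphY] by simp
  show ?thesis
    unfolding case_prod_beta' by measurable
qed

lemma nn_integral_L2_density_harmonic_sum:
  assumes field: "iso_gauss_field M a Cl" and I: "finite I" "\<forall>i\<in>I. \<bar>snd i\<bar> \<le> int (fst i)"
  shows "(\<integral>\<^sup>+ \<omega>. L2_density (\<lambda>\<omega> \<theta> \<phi>. \<Sum>i\<in>I. w i * sphY (fst i) (snd i) \<theta> \<phi> * a (fst i) (snd i) \<omega>) (\<omega>, y) \<partial>M) =
    (\<Sum>i\<in>I. ennreal ((norm (w i))\<^sup>2 * Cl (fst i)) *
      (ennreal ((norm (sphY (fst i) (snd i) (fst y) (snd y)))\<^sup>2 * sin (fst y)) * indicator ({0..<pi} \<times> {0..<2*pi}) y))"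
    (is "(\<integral>\<^sup>+ \<omega>. L2_density ?X (\<omega>, y) \<partial>M) = _")
proof (cases "y \<in> {0..<pi} \<times> {0..<2*pi}")
  case True
  then have sin: "sin (fst y) \<ge> 0"
    by (auto intro!: sin_ge_zero)
  define v where "v i = w i * sphY (fst i) (snd i) (fst y) (snd y)" for i
  have [measurable]: "i \<in> I \<Longrightarrow> a (fst i) (snd i) \<in> borel_measurable M" for i
    using iso_gauss_field_measurable[OF field] I(2) by auto
  have "L2_density ?X (\<omega>, y) = ennreal ((norm (\<Sum>i\<in>I. v i * a (fst i) (snd i) \<omega>))\<^sup>2) * ennreal (sin (fst y))"
    for \<omega>
    using True sin by (simp add: L2_density_def v_def ennreal_mult mult.assoc)
  moreover have "(\<lambda>\<omega>. ennreal ((norm (\<Sum>i\<in>I. v i * a (fst i) (snd i) \<omega>))\<^sup>2)) \<in> borel_measurable M"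
    by measurable
  ultimately have "(\<integral>\<^sup>+ \<omega>. L2_density ?X (\<omega>, y) \<partial>M) =
      ennreal (\<Sum>i\<in>I. (norm (v i))\<^sup>2 * Cl (fst i)) * ennreal (sin (fst y))"
    by (simp add: nn_integral_multc nn_integral_norm_sum_square[OF field I])
  also have "\<dots> = ennreal (\<Sum>i\<in>I. ((norm (w i))\<^sup>2 * Cl (fst i)) *
      ((norm (sphY (fst i) (snd i) (fst y) (snd y)))\<^sup>2 * sin (fst y)))"
    unfolding ennreal_mult''[symmetric, OF sin]
    by (simp add: sum_distrib_left sum_distrib_right v_def norm_mult power_mult_distrib mult_ac)
  also have "\<dots> = (\<Sum>i\<in>I. ennreal ((norm (w i))\<^sup>2 * Cl (fst i)) *
      (ennreal ((norm (sphY (fst i) (snd i) (fst y) (snd y)))\<^sup>2 * sin (fst y)) * indicator ({0..<pi} \<times> {0..<2*pi}) y))"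
    using True sin iso_gauss_field_Cl_nonneg[OF field] by (simp add: ennreal_mult sum_ennreal[symmetric])
  finally show ?thesis .
qed (simp add: L2_density_def)

lemma L2sq_harmonic_sum:
  assumes field: "iso_gauss_field M a Cl" and I: "finite I" "\<forall>i\<in>I. \<bar>snd i\<bar> \<le> int (fst i)"
  shows "L2sq M (\<lambda>\<omega> \<theta> \<phi>. \<Sum>i\<in>I. w i * sphY (fst i) (snd i) \<theta> \<phi> * a (fst i) (snd i) \<omega>)
       = ennreal (\<Sum>i\<in>I. (norm (w i))\<^sup>2 * Cl (fst i))"
proof -
  have "L2sq M (\<lambda>\<omega> \<theta> \<phi>. \<Sum>i\<in>I. w i * sphY (fst i) (snd i) \<theta> \<phi> * a (fst i) (snd i) \<omega>) =
      (\<Sum>i\<in>I. ennreal ((norm (w i))\<^sup>2 * Cl (fst i)) * (\<integral>\<^sup>+y\<in>{0..<pi} \<times> {0..<2*pi}.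
        ennreal ((norm (sphY (fst i) (snd i) (fst y) (snd y)))\<^sup>2 * sin (fst y)) \<partial>(lborel \<Otimes>\<^sub>M lborel)))"
    using L2sq_eq_nn_integral_expectation[OF _ borel_measurable_harmonic_sum[OF field I(2)]]
      prob_space_imp_sigma_finite[OF iso_gauss_field_prob_space[OF field]]
    by (simp add: nn_integral_L2_density_harmonic_sum[OF field I] nn_integral_sum nn_integral_cmult)
  also have "\<dots> = (\<Sum>i\<in>I. ennreal ((norm (w i))\<^sup>2 * Cl (fst i)))"
    using I(2) by (intro sum.cong refl) (simp add: nn_integral_sphY_square_pair)
  finally show ?thesis
    using iso_gauss_field_Cl_nonneg[OF field] by (simp add: sum_ennreal)
qed

section \<open>Bounds on the temporal factors\<close>

lemma exp_mult_cosh_sinh_le_1: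
  fixes K \<alpha> t :: real
  assumes K: "0 < K" "K \<le> \<alpha>" and t: "0 \<le> t"
  shows "exp (- \<alpha> * t) * (cosh (t * K) + \<alpha> * (sinh (t * K) / K)) \<le> 1"
proof -
  define h where "h x = exp (- \<alpha> * x) * (cosh (x * K) + \<alpha> / K * sinh (x * K))" for x
  have "h t \<le> h 0"
  proof (rule DERIV_nonpos_imp_nonincreasing[OF t])
    fix x
    assume x: "0 \<le> x" "x \<le> t"
    have "DERIV h x :> exp (- \<alpha> * x) * (- \<alpha>) * (cosh (x * K) + \<alpha> / K * sinh (x * K))
        + exp (- \<alpha> * x) * (sinh (x * K) * K + \<alpha> / K * (cosh (x * K) * K))"
      unfolding h_def by (auto intro!: derivative_eq_intros)
    moreover have "exp (- \<alpha> * x) * (- \<alpha>) * (cosh (x * K) + \<alpha> / K * sinh (x * K))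
        + exp (- \<alpha> * x) * (sinh (x * K) * K + \<alpha> / K * (cosh (x * K) * K))
        = exp (- \<alpha> * x) * sinh (x * K) * ((K\<^sup>2 - \<alpha>\<^sup>2) / K)"
      using K by (simp add: field_simps power2_eq_square)
    moreover have "sinh (x * K) \<ge> 0"
      using real_le_x_sinh[of "x * K"] x K by simp
    moreover have "K\<^sup>2 \<le> \<alpha>\<^sup>2"
      using K by (intro power_mono) auto
    ultimately show "\<exists>y. DERIV h x :> y \<and> y \<le> 0"
      using K by (intro exI[of _ "exp (- \<alpha> * x) * sinh (x * K) * ((K\<^sup>2 - \<alpha>\<^sup>2) / K)"])
        (auto intro!: mult_nonneg_nonpos divide_nonpos_pos)
  qed
  then show ?thesis
    by (simp add: h_def)
qed

lemma abs_overdamped_factor_le_1: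
  fixes K \<alpha> t :: real
  assumes K: "0 \<le> K" "K \<le> \<alpha>" and t: "0 \<le> t"
  shows "\<bar>exp (- \<alpha> * t) * (cosh (t * K) + \<alpha> * (if K = 0 then t else sinh (t * K) / K))\<bar> \<le> 1"
proof -
  have "0 \<le> (if K = 0 then t else sinh (t * K) / K)"
    using real_le_x_sinh[of "t * K"] K t by auto
  then have "0 \<le> cosh (t * K) + \<alpha> * (if K = 0 then t else sinh (t * K) / K)"
    using cosh_real_pos[of "t * K"] K by (simp add: add_nonneg_nonneg less_imp_le)
  moreover have "exp (- \<alpha> * t) * (cosh (t * K) + \<alpha> * (if K = 0 then t else sinh (t * K) / K)) \<le> 1"
  proof (cases "K = 0")
    case True
    have "exp (- \<alpha> * t) * (1 + \<alpha> * t) \<le> exp (- \<alpha> * t) * exp (\<alpha> * t)"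
      by (intro mult_left_mono exp_ge_add_one_self) auto
    then show ?thesis
      using True by (simp add: exp_minus field_simps)
  next
    case False
    then show ?thesis
      using exp_mult_cosh_sinh_le_1[of K \<alpha> t] K t by simp
  qed
  ultimately show ?thesis
    by simp
qed

lemma abs_cos_add_mult_sin_le:
  fixes x \<beta> :: real
  assumes "0 \<le> \<beta>"
  shows "\<bar>cos x + \<beta> * sin x\<bar> \<le> 1 + \<beta>"
proof -
  have "\<bar>cos x + \<beta> * sin x\<bar> \<le> \<bar>cos x\<bar> + \<beta> * \<bar>sin x\<bar>"
    using assms by (simp add: abs_triangle_ineq[THEN order_trans] abs_mult)
  also have "\<dots> \<le> 1 + \<beta> * 1"
    using assms by (intro add_mono mult_left_mono) auto
  finally show ?thesis
    by simp
qed

lemma le_lstar_iff: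
  fixes c D k :: real
  assumes "c > 0" "D > 0" "k > 0" "x \<ge> 0"
  shows "x \<le> lstar c D k \<longleftrightarrow> c\<^sup>2 * x * (x + 1) * k\<^sup>2 \<le> c ^ 4 / (4 * D\<^sup>2)"
proof -
  have Dk: "D * k > 0"
    using assms by simp
  have "x \<le> lstar c D k \<longleftrightarrow> D * k * (2 * x + 1) \<le> sqrt (D\<^sup>2 * k\<^sup>2 + c\<^sup>2)"
    unfolding lstar_def using Dk by (simp add: pos_le_divide_eq algebra_simps)
  also have "\<dots> \<longleftrightarrow> sqrt ((D * k * (2 * x + 1))\<^sup>2) \<le> sqrt (D\<^sup>2 * k\<^sup>2 + c\<^sup>2)"
    using Dk assms(4) by simp
  also have "\<dots> \<longleftrightarrow> (D * k * (2 * x + 1))\<^sup>2 \<le> D\<^sup>2 * k\<^sup>2 + c\<^sup>2"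
    by (rule real_sqrt_le_iff)
  also have "\<dots> \<longleftrightarrow> 4 * D\<^sup>2 * k\<^sup>2 * (x * (x + 1)) \<le> c\<^sup>2"
    by (simp add: power2_eq_square algebra_simps)
  also have "\<dots> \<longleftrightarrow> c\<^sup>2 * (4 * D\<^sup>2 * k\<^sup>2 * (x * (x + 1))) \<le> c\<^sup>2 * c\<^sup>2"
    using assms by (intro mult_le_cancel_left_pos[symmetric]) simp
  also have "\<dots> \<longleftrightarrow> c\<^sup>2 * x * (x + 1) * k\<^sup>2 \<le> c ^ 4 / (4 * D\<^sup>2)"
    using assms by (simp add: pos_le_divide_eq power2_eq_square power4_eq_xxxx mult_ac)
  finally show ?thesis .
qed

lemma lstar_nonneg: "c > 0 \<Longrightarrow> D > 0 \<Longrightarrow> k > 0 \<Longrightarrow> 0 \<le> lstar c D k"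
  using le_lstar_iff[of c D k 0] by simp

lemma Kl_bounds:
  assumes "c > 0" "D > 0" "k > 0" "real l \<le> lstar c D k"
  shows "0 \<le> Kl c D k l" "Kl c D k l \<le> c\<^sup>2 / (2 * D)"
proof -
  have "c\<^sup>2 * real l * (real l + 1) * k\<^sup>2 \<le> c ^ 4 / (4 * D\<^sup>2)"
    using le_lstar_iff[OF assms(1-3)] assms(4) by simp
  then show "0 \<le> Kl c D k l"
    by (simp add: Kl_def)
  have "Kl c D k l \<le> sqrt (c ^ 4 / (4 * D\<^sup>2))"
    unfolding Kl_def by (intro real_sqrt_le_mono) simp
  also have "c ^ 4 / (4 * D\<^sup>2) = (c\<^sup>2 / (2 * D))\<^sup>2"
    by (simp add: power_divide power_mult_distrib flip: power_mult)
  finally show "Kl c D k l \<le> c\<^sup>2 / (2 * D)"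
    using assms by simp
qed

lemma Kl'_pos:
  assumes "c > 0" "D > 0" "k > 0" "lstar c D k < real l"
  shows "Kl' c D k l > 0"
  using le_lstar_iff[OF assms(1-3), of "real l"] assms(4) by (simp add: Kl'_def)

lemma Kl'_mono:
  assumes "l0 \<le> l"
  shows "Kl' c D k l0 \<le> Kl' c D k l"
proof -
  have "real l0 * (real l0 + 1) \<le> real l * (real l + 1)"
    using assms by (intro mult_mono) auto
  then have "c\<^sup>2 * real l0 * (real l0 + 1) * k\<^sup>2 \<le> c\<^sup>2 * real l * (real l + 1) * k\<^sup>2"
    by (metis mult.assoc mult_left_mono mult_right_mono zero_le_power2)
  then show ?thesis
    unfolding Kl'_def by (intro real_sqrt_le_mono) simp
qed

definition mode_factor :: "real \<Rightarrow> real \<Rightarrow> real \<Rightarrow> real \<Rightarrow> nat \<Rightarrow> real" where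
  "mode_factor c D k t l = exp (- (c\<^sup>2 * t) / (2 * D)) * (Al c D k l t + Bl c D k l t)"

definition mode_bound :: "real \<Rightarrow> real \<Rightarrow> real \<Rightarrow> real" where
  "mode_bound c D k = 1 + c\<^sup>2 / (2 * D) / Kl' c D k (nat \<lfloor>lstar c D k\<rfloor> + 1)"

lemma mode_bound_ge_1:
  assumes "c > 0" "D > 0" "k > 0"
  shows "mode_bound c D k \<ge> 1"
proof -
  have "lstar c D k < real (nat \<lfloor>lstar c D k\<rfloor> + 1)"
    by linarith
  then have "Kl' c D k (nat \<lfloor>lstar c D k\<rfloor> + 1) > 0"
    by (rule Kl'_pos[OF assms])
  then show ?thesis
    using assms by (simp add: mode_bound_def)
qed

lemma abs_mode_factor_le_oscillating:
  assumes c: "c > 0" and D: "D > 0" and k: "k > 0" and l: "lstar c D k < real l"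
  shows "\<bar>mode_factor c D k t l\<bar> \<le> mode_bound c D k * exp (- (c\<^sup>2 * t) / (2 * D))"
proof -
  define \<alpha> where "\<alpha> = c\<^sup>2 / (2 * D)"
  define l0 where "l0 = nat \<lfloor>lstar c D k\<rfloor> + 1"
  have \<alpha>: "\<alpha> > 0"
    using c D by (simp add: \<alpha>_def)
  have "lstar c D k < real l0"
    unfolding l0_def by linarith
  then have "Kl' c D k l0 > 0"
    by (rule Kl'_pos[OF c D k])
  moreover have "l0 \<le> l"
    using l lstar_nonneg[OF c D k] unfolding l0_def by linarith
  ultimately have "\<alpha> / Kl' c D k l \<le> \<alpha> / Kl' c D k l0"
    using Kl'_mono[of l0 l c D k] Kl'_pos[OF c D k l] \<alpha> by (intro divide_left_mono) auto
  moreover have "\<bar>cos (t * Kl' c D k l) + \<alpha> / Kl' c D k l * sin (t * Kl' c D k l)\<bar> \<le> 1 + \<alpha> / Kl' c D k l"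
    using \<alpha> Kl'_pos[OF c D k l] by (intro abs_cos_add_mult_sin_le) simp
  ultimately have "\<bar>Al c D k l t + Bl c D k l t\<bar> \<le> mode_bound c D k"
    using l by (simp add: Al_def Bl_def mode_bound_def \<alpha>_def l0_def)
  then show ?thesis
    by (simp add: mode_factor_def abs_mult mult.commute mult_left_mono)
qed

lemma abs_mode_factor_le:
  assumes c: "c > 0" and D: "D > 0" and k: "k > 0" and t: "t \<ge> 0"
  shows "\<bar>mode_factor c D k t l\<bar> \<le> mode_bound c D k"
proof (cases "real l \<le> lstar c D k")
  case True
  then have "\<bar>mode_factor c D k t l\<bar> \<le> 1"
    using abs_overdamped_factor_le_1[of "Kl c D k l" "c\<^sup>2 / (2 * D)" t] Kl_bounds[OF c D k True] t
    by (simp add: mode_factor_def Al_def Bl_def)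
  then show ?thesis
    using mode_bound_ge_1[OF c D k] by linarith
next
  case False
  then have "\<bar>mode_factor c D k t l\<bar> \<le> mode_bound c D k * exp (- (c\<^sup>2 * t) / (2 * D))"
    using abs_mode_factor_le_oscillating[OF c D k] by simp
  also have "\<dots> \<le> mode_bound c D k"
    using c D t mode_bound_ge_1[OF c D k] by (simp add: mult_left_le)
  finally show ?thesis .
qed

section \<open>The truncation error\<close>

lemma xi_eq: "xi c D k a l m t \<omega> = complex_of_real (Al c D k l t + Bl c D k l t) * a l m \<omega>"
proof -
  have "sphY l 0 0 0 = complex_of_real (sqrt ((2 * real l + 1) / (4 * pi)))"
    by (simp add: sphY_def dlm_def legendreP_l0_at_1)
  moreover have "sqrt (4 * pi / (2 * real l + 1)) * sqrt ((2 * real l + 1) / (4 * pi)) = 1"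
    by (simp add: real_sqrt_mult[symmetric])
  ultimately have normalisation: "complex_of_real (sqrt (4 * pi / (2 * real l + 1))) * cnj (sphY l 0 0 0) = 1"
    by (simp flip: of_real_mult)
  have "xi c D k a l m t \<omega> = (complex_of_real (sqrt (4 * pi / (2 * real l + 1))) * cnj (sphY l 0 0 0)) *
      (complex_of_real (Al c D k l t + Bl c D k l t) * a l m \<omega>)"
    unfolding xi_def by (simp only: mult_ac)
  then show ?thesis
    by (simp only: normalisation mult_1)
qed

lemma usum_diff_eq:
  assumes "L \<le> N"
  shows "usum c D k a N \<omega> \<theta> \<phi> t - usum c D k a L \<omega> \<theta> \<phi> t =
    (\<Sum>i\<in>Sigma {L..<N} (\<lambda>l. {- int l..int l}).
      complex_of_real (mode_factor c D k t (fst i)) * sphY (fst i) (snd i) \<theta> \<phi> * a (fst i) (snd i) \<omega>)"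
proof -
  define F where "F l = (\<Sum>m\<in>{- int l..int l}. sphY l m \<theta> \<phi> * xi c D k a l m t \<omega>)" for l
  have "(\<Sum>l<N. F l) = (\<Sum>l<L. F l) + (\<Sum>l\<in>{L..<N}. F l)"
    using sum.atLeastLessThan_concat[of 0 L N F] assms by (simp add: atLeast0LessThan)
  then have "usum c D k a N \<omega> \<theta> \<phi> t - usum c D k a L \<omega> \<theta> \<phi> t =
      complex_of_real (exp (- (c\<^sup>2 * t) / (2 * D))) * (\<Sum>l\<in>{L..<N}. F l)"
    unfolding usum_def F_def by (simp add: algebra_simps)
  also have "\<dots> = (\<Sum>l\<in>{L..<N}. \<Sum>m\<in>{- int l..int l}.
      complex_of_real (mode_factor c D k t l) * sphY l m \<theta> \<phi> * a l m \<omega>)"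
    unfolding F_def xi_eq mode_factor_def sum_distrib_left by (intro sum.cong refl) (simp add: mult_ac)
  finally show ?thesis
    by (simp add: sum.Sigma split_beta)
qed

lemma borel_measurable_usum:
  assumes "iso_gauss_field M a Cl"
  shows "(\<lambda>(\<omega>, \<theta>, \<phi>). usum c D k a N \<omega> \<theta> \<phi> t) \<in> borel_measurable (M \<Otimes>\<^sub>M (lborel \<Otimes>\<^sub>M lborel))"
proof -
  have "usum c D k a N \<omega> \<theta> \<phi> t = (\<Sum>i\<in>Sigma {0..<N} (\<lambda>l. {- int l..int l}).
      complex_of_real (mode_factor c D k t (fst i)) * sphY (fst i) (snd i) \<theta> \<phi> * a (fst i) (snd i) \<omega>)"
    for \<omega> \<theta> \<phi>
    using usum_diff_eq[of 0 N c D k a \<omega> \<theta> \<phi> t] by (simp add: usum_def)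
  then show ?thesis
    by (simp only:) (rule borel_measurable_harmonic_sum[OF assms], auto)
qed

lemma L2sq_usum_diff:
  assumes "iso_gauss_field M a Cl" and "L \<le> N"
  shows "L2sq M (\<lambda>\<omega> \<theta> \<phi>. usum c D k a N \<omega> \<theta> \<phi> t - usum c D k a L \<omega> \<theta> \<phi> t) =
    ennreal (\<Sum>l\<in>{L..<N}. (2 * real l + 1) * ((mode_factor c D k t l)\<^sup>2 * Cl l))"
proof -
  have "(\<Sum>i\<in>Sigma {L..<N} (\<lambda>l. {- int l..int l}). (norm (complex_of_real (mode_factor c D k t (fst i))))\<^sup>2 * Cl (fst i))
      = (\<Sum>l\<in>{L..<N}. \<Sum>m\<in>{- int l..int l}. (mode_factor c D k t l)\<^sup>2 * Cl l)"
    by (subst sum.Sigma) (auto simp: split_beta)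
  also have "\<dots> = (\<Sum>l\<in>{L..<N}. (2 * real l + 1) * ((mode_factor c D k t l)\<^sup>2 * Cl l))"
  proof (intro sum.cong refl)
    fix l
    have "card {- int l..int l} = 2 * l + 1"
      by simp
    then show "(\<Sum>m\<in>{- int l..int l}. (mode_factor c D k t l)\<^sup>2 * Cl l) =
        (2 * real l + 1) * ((mode_factor c D k t l)\<^sup>2 * Cl l)"
      by simp
  qed
  finally have sum_eq: "(\<Sum>i\<in>Sigma {L..<N} (\<lambda>l. {- int l..int l}).
      (norm (complex_of_real (mode_factor c D k t (fst i))))\<^sup>2 * Cl (fst i)) =
      (\<Sum>l\<in>{L..<N}. (2 * real l + 1) * ((mode_factor c D k t l)\<^sup>2 * Cl l))" .
  show ?thesis
    unfolding usum_diff_eq[OF assms(2)] sum_eq[symmetric] by (rule L2sq_harmonic_sum[OF assms(1)]) auto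
qed

lemma L2sq_usum_diff_le:
  assumes field: "iso_gauss_field M a Cl" and "L \<le> N"
    and K: "\<And>l. L \<le> l \<Longrightarrow> \<bar>mode_factor c D k t l\<bar> \<le> K"
  shows "L2sq M (\<lambda>\<omega> \<theta> \<phi>. usum c D k a N \<omega> \<theta> \<phi> t - usum c D k a L \<omega> \<theta> \<phi> t)
      \<le> ennreal (K\<^sup>2 * (\<Sum>l. (2 * real (l + L) + 1) * Cl (l + L)))"
proof -
  have Cl_nonneg: "Cl l \<ge> 0" for l
    by (rule iso_gauss_field_Cl_nonneg[OF field])
  have "(\<Sum>l\<in>{L..<N}. (2 * real l + 1) * ((mode_factor c D k t l)\<^sup>2 * Cl l)) \<le>
      (\<Sum>l\<in>{L..<N}. K\<^sup>2 * ((2 * real l + 1) * Cl l))"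
  proof (intro sum_mono)
    fix l
    assume "l \<in> {L..<N}"
    then have "(mode_factor c D k t l)\<^sup>2 \<le> K\<^sup>2"
      using K by (metis atLeastLessThan_iff abs_ge_zero order_trans power2_abs power_mono)
    then show "(2 * real l + 1) * ((mode_factor c D k t l)\<^sup>2 * Cl l) \<le> K\<^sup>2 * ((2 * real l + 1) * Cl l)"
      using Cl_nonneg[of l] by (simp add: mult_right_mono mult.left_commute)
  qed
  also have "\<dots> = K\<^sup>2 * (\<Sum>l\<in>{L..<N}. (2 * real l + 1) * Cl l)"
    by (simp add: sum_distrib_left)
  also have "(\<Sum>l\<in>{L..<N}. (2 * real l + 1) * Cl l) = (\<Sum>l\<in>{0..<N - L}. (2 * real (l + L) + 1) * Cl (l + L))"
    using sum.shift_bounds_nat_ivl[of "\<lambda>l. (2 * real l + 1) * Cl l" 0 L "N - L"] assms(2) by simp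
  also have "K\<^sup>2 * (\<Sum>l\<in>{0..<N - L}. (2 * real (l + L) + 1) * Cl (l + L)) \<le>
      K\<^sup>2 * (\<Sum>l. (2 * real (l + L) + 1) * Cl (l + L))"
    using iso_gauss_field_summable_shift[OF field] Cl_nonneg by (intro mult_left_mono sum_le_suminf) auto
  finally show ?thesis
    unfolding L2sq_usum_diff[OF field assms(2)] by (rule ennreal_leI)
qed

lemma L2sq_le_of_tendsto:
  assumes U: "(\<lambda>(\<omega>, \<theta>, \<phi>). U \<omega> \<theta> \<phi>) \<in> borel_measurable (M \<Otimes>\<^sub>M (lborel \<Otimes>\<^sub>M lborel))"
    and V: "\<And>N. (\<lambda>(\<omega>, \<theta>, \<phi>). V N \<omega> \<theta> \<phi>) \<in> borel_measurable (M \<Otimes>\<^sub>M (lborel \<Otimes>\<^sub>M lborel))"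
    and lim: "(\<lambda>N. L2sq M (\<lambda>\<omega> \<theta> \<phi>. U \<omega> \<theta> \<phi> - V N \<omega> \<theta> \<phi>)) \<longlonglongrightarrow> 0"
    and bound: "\<And>N. L \<le> N \<Longrightarrow> L2sq M (\<lambda>\<omega> \<theta> \<phi>. V N \<omega> \<theta> \<phi> - V L \<omega> \<theta> \<phi>) \<le> B"
  shows "L2sq M (\<lambda>\<omega> \<theta> \<phi>. U \<omega> \<theta> \<phi> - V L \<omega> \<theta> \<phi>) \<le> 2 * B"
proof (rule LIMSEQ_le_const)
  show "(\<lambda>N. 2 * L2sq M (\<lambda>\<omega> \<theta> \<phi>. U \<omega> \<theta> \<phi> - V N \<omega> \<theta> \<phi>) + 2 * B) \<longlonglongrightarrow> 2 * B"
    using tendsto_add[OF ennreal_tendsto_cmult[OF _ lim] tendsto_const, of 2 "2 * B"] by simp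
  have "L2sq M (\<lambda>\<omega> \<theta> \<phi>. U \<omega> \<theta> \<phi> - V L \<omega> \<theta> \<phi>) \<le>
      2 * L2sq M (\<lambda>\<omega> \<theta> \<phi>. U \<omega> \<theta> \<phi> - V N \<omega> \<theta> \<phi>) + 2 * B" if "L \<le> N" for N
    using L2sq_diff_le[OF U V V, of L N] bound[OF that]
    by (meson add_left_mono mult_left_mono order_trans zero_le)
  then show "\<exists>N0. \<forall>N\<ge>N0. L2sq M (\<lambda>\<omega> \<theta> \<phi>. U \<omega> \<theta> \<phi> - V L \<omega> \<theta> \<phi>) \<le>
      2 * L2sq M (\<lambda>\<omega> \<theta> \<phi>. U \<omega> \<theta> \<phi> - V N \<omega> \<theta> \<phi>) + 2 * B"
    by blast
qed

lemma truncation_error_le: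
  assumes field: "iso_gauss_field M a Cl"
    and U: "(\<lambda>(\<omega>, \<theta>, \<phi>). U \<omega> \<theta> \<phi>) \<in> borel_measurable (M \<Otimes>\<^sub>M (lborel \<Otimes>\<^sub>M lborel))"
    and lim: "(\<lambda>N. L2sq M (\<lambda>\<omega> \<theta> \<phi>. U \<omega> \<theta> \<phi> - usum c D k a N \<omega> \<theta> \<phi> t)) \<longlonglongrightarrow> 0"
    and K: "\<And>l. L \<le> l \<Longrightarrow> \<bar>mode_factor c D k t l\<bar> \<le> K"
  shows "L2sq M (\<lambda>\<omega> \<theta> \<phi>. U \<omega> \<theta> \<phi> - usum c D k a L \<omega> \<theta> \<phi> t)
    \<le> ennreal ((sqrt 2 * K * sqrt (\<Sum>l. (2 * real (l + L) + 1) * Cl (l + L)))\<^sup>2)"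
proof -
  define T where "T = (\<Sum>l. (2 * real (l + L) + 1) * Cl (l + L))"
  have "T \<ge> 0"
    unfolding T_def using iso_gauss_field_summable_shift[OF field] iso_gauss_field_Cl_nonneg[OF field]
    by (intro suminf_nonneg mult_nonneg_nonneg) auto
  have "L2sq M (\<lambda>\<omega> \<theta> \<phi>. U \<omega> \<theta> \<phi> - usum c D k a L \<omega> \<theta> \<phi> t) \<le> 2 * ennreal (K\<^sup>2 * T)"
    using U borel_measurable_usum[OF field] lim L2sq_usum_diff_le[OF field _ K]
    unfolding T_def by (rule L2sq_le_of_tendsto)
  also have "\<dots> = ennreal ((sqrt 2 * K * sqrt T)\<^sup>2)"
    using \<open>T \<ge> 0\<close> by (simp add: ennreal_mult' power_mult_distrib mult.assoc)
  finally show ?thesis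
    unfolding T_def .
qed

theorem theorem3:
  fixes c D k :: real
  assumes "c > 0" and "D > 0" and "k > 0"
  shows "\<exists>Cst\<ge>0. \<forall>(M :: 'a measure) a Cl (L :: nat) (t :: real) U.
     iso_gauss_field M a Cl \<and> t > 0 \<and>
     (\<lambda>(\<omega>, \<theta>, \<phi>). U \<omega> \<theta> \<phi>) \<in> borel_measurable (M \<Otimes>\<^sub>M (lborel \<Otimes>\<^sub>M lborel)) \<and>
     (\<lambda>N. L2sq M (\<lambda>\<omega> \<theta> \<phi>. U \<omega> \<theta> \<phi> - usum c D k a N \<omega> \<theta> \<phi> t)) \<longlonglongrightarrow> 0
     \<longrightarrow>
       L2sq M (\<lambda>\<omega> \<theta> \<phi>. U \<omega> \<theta> \<phi> - usum c D k a L \<omega> \<theta> \<phi> t)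
         \<le> ennreal ((Cst * sqrt (\<Sum>l. (2 * real (l + L) + 1) * Cl (l + L)))^2) \<and>
       (real L > lstar c D k \<longrightarrow>
         L2sq M (\<lambda>\<omega> \<theta> \<phi>. U \<omega> \<theta> \<phi> - usum c D k a L \<omega> \<theta> \<phi> t)
           \<le> ennreal ((Cst * exp (- (c^2 * t) / (2 * D)) * sqrt (\<Sum>l. (2 * real (l + L) + 1) * Cl (l + L)))^2))"
proof ((intro exI[of _ "sqrt 2 * mode_bound c D k"] conjI allI impI; (elim conjE)?), goal_cases)
  case 1
  then show ?case
    using mode_bound_ge_1[OF assms] by simp
next
  case (2 M a Cl L t U)
  show ?case
    by (rule truncation_error_le[OF 2(1,3,4) abs_mode_factor_le[OF assms less_imp_le[OF 2(2)]]])
next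
  case (3 M a Cl L t U)
  have "\<bar>mode_factor c D k t l\<bar> \<le> mode_bound c D k * exp (- (c\<^sup>2 * t) / (2 * D))" if "L \<le> l" for l
    using 3(1) that abs_mode_factor_le_oscillating[OF assms] by simp
  from truncation_error_le[OF 3(2,4,5) this] show ?case
    by (simp only: mult.assoc)
qed

end
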